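(* Let $\mathsf{T}$ be a rooted plane tree, let $k\geq 0$ be an integer, and suppose $\delta'=\mathsf{Pop}^k(\delta)$ for some $\delta\in\mathcal{O}(\mathsf{T})$. Then for each $v\in\mathsf{T}$, each section of $\delta'(v)$ has at least $k-1$ (distinct) beads in $\delta'$.
   Context: A rooted plane tree $\mathsf{T}$ is a finite tree with a distinguished root, regarded as a poset $\leq_\mathsf{T}$ in which $v'\leq_\mathsf{T} v$ iff $v$ lies on the path from $v'$ to the root; children of $v$ are nodes covered by $v$. For a set $S$ of nodes and a node $u$, $\Delta_S(u)=\{x\in S:x\leq_\mathsf{T} u\}$. An ornament is a nonempty set of nodes inducing a connected subgraph; an ornamentation is a map $\sigma$ from nodes to ornaments such that the unique maximal element of $\sigma(v)$ is $v$ and any two sets $\sigma(v),\sigma(v')$ are nested or disjoint. $\mathcal{O}(\mathsf{T})$ is the set of ornamentations ordered by pointwise inclusion (a lattice with meet given by pointwise intersection); $\mathsf{Pop}(\sigma)=\bigwedge(\{\sigma\}\cup\{\sigma':\sigma'\lessdot\sigma\})$ and $\mathsf{Pop}^k$ is its $k$-th iterate. A section of $\sigma(v)$ is a set $\Delta_{\sigma(v)}(v')$ for a child $v'$ of $v$ with $v'\in\sigma(v)$ (the $v'$-section). An ornament $\sigma(x)$ is a bead of the $v'$-section of $\sigma(v)$ in $\sigma$ if $x\leq_\mathsf{T} v'$, $x\notin\sigma(v)$, and for every node $y$ on the path from $v'$ to $x$ (endpoints included), either $y\in\sigma(v)$ or $\sigma(y)=\{y\}$. *)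

theory Defs
  imports Main
begin

text \<open>A rooted tree on the finite node set V with root r, given by a parent map par
  (par is only meaningful on V - {r}). The plane structure (ordering of children)
  plays no role in the statement and is omitted.\<close>

definition tree_edges :: "'a set \<Rightarrow> ('a \<Rightarrow> 'a) \<Rightarrow> 'a \<Rightarrow> ('a \<times> 'a) set" where
  "tree_edges V par r = {(x, par x) | x. x \<in> V - {r}}"

definition rooted_tree :: "'a set \<Rightarrow> ('a \<Rightarrow> 'a) \<Rightarrow> 'a \<Rightarrow> bool" where
  "rooted_tree V par r \<longleftrightarrow> finite V \<and> r \<in> V \<and> (\<forall>x \<in> V - {r}. par x \<in> V)
     \<and> (\<forall>x \<in> V. (x, r) \<in> (tree_edges V par r)\<^sup>*)"

definition tle :: "'a set \<Rightarrow> ('a \<Rightarrow> 'a) \<Rightarrow> 'a \<Rightarrow> 'a \<Rightarrow> 'a \<Rightarrow> bool" where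
  "tle V par r x y \<longleftrightarrow> x \<in> V \<and> y \<in> V \<and> (x, y) \<in> (tree_edges V par r)\<^sup>*"

definition children :: "'a set \<Rightarrow> ('a \<Rightarrow> 'a) \<Rightarrow> 'a \<Rightarrow> 'a \<Rightarrow> 'a set" where
  "children V par r v = {c \<in> V. tle V par r c v \<and> c \<noteq> v \<and>
      \<not> (\<exists>w \<in> V. tle V par r c w \<and> tle V par r w v \<and> w \<noteq> c \<and> w \<noteq> v)}"

definition Delta :: "'a set \<Rightarrow> ('a \<Rightarrow> 'a) \<Rightarrow> 'a \<Rightarrow> 'a set \<Rightarrow> 'a \<Rightarrow> 'a set" where
  "Delta V par r S u = {x \<in> S. tle V par r x u}"

definition induced_adj :: "'a set \<Rightarrow> ('a \<Rightarrow> 'a) \<Rightarrow> 'a \<Rightarrow> 'a set \<Rightarrow> ('a \<times> 'a) set" where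
  "induced_adj V par r S = {(x, y). x \<in> S \<and> y \<in> S \<and>
      ((x, y) \<in> tree_edges V par r \<or> (y, x) \<in> tree_edges V par r)}"

definition ornament :: "'a set \<Rightarrow> ('a \<Rightarrow> 'a) \<Rightarrow> 'a \<Rightarrow> 'a set \<Rightarrow> bool" where
  "ornament V par r S \<longleftrightarrow> S \<noteq> {} \<and> S \<subseteq> V \<and>
     (\<forall>x \<in> S. \<forall>y \<in> S. (x, y) \<in> (induced_adj V par r S)\<^sup>*)"

definition maximal_elems :: "'a set \<Rightarrow> ('a \<Rightarrow> 'a) \<Rightarrow> 'a \<Rightarrow> 'a set \<Rightarrow> 'a set" where
  "maximal_elems V par r S = {x \<in> S. \<not> (\<exists>y \<in> S. tle V par r x y \<and> y \<noteq> x)}"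

text \<open>Ornamentations; outside V the map is fixed to {} so that ornamentations are
  determined by their values on nodes.\<close>
definition ornamentations :: "'a set \<Rightarrow> ('a \<Rightarrow> 'a) \<Rightarrow> 'a \<Rightarrow> ('a \<Rightarrow> 'a set) set" where
  "ornamentations V par r = {\<sigma>.
     (\<forall>v \<in> V. ornament V par r (\<sigma> v) \<and> maximal_elems V par r (\<sigma> v) = {v}) \<and>
     (\<forall>v \<in> V. \<forall>w \<in> V. \<sigma> v \<subseteq> \<sigma> w \<or> \<sigma> w \<subseteq> \<sigma> v \<or> \<sigma> v \<inter> \<sigma> w = {}) \<and>
     (\<forall>v. v \<notin> V \<longrightarrow> \<sigma> v = {})}"

definition orn_le :: "('a \<Rightarrow> 'a set) \<Rightarrow> ('a \<Rightarrow> 'a set) \<Rightarrow> bool" where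
  "orn_le \<sigma> \<tau> \<longleftrightarrow> (\<forall>v. \<sigma> v \<subseteq> \<tau> v)"

definition orn_covered :: "'a set \<Rightarrow> ('a \<Rightarrow> 'a) \<Rightarrow> 'a \<Rightarrow> ('a \<Rightarrow> 'a set) \<Rightarrow> ('a \<Rightarrow> 'a set) \<Rightarrow> bool" where
  "orn_covered V par r \<sigma>' \<sigma> \<longleftrightarrow> \<sigma>' \<in> ornamentations V par r \<and> \<sigma> \<in> ornamentations V par r \<and>
     orn_le \<sigma>' \<sigma> \<and> \<sigma>' \<noteq> \<sigma> \<and>
     \<not> (\<exists>\<tau> \<in> ornamentations V par r. orn_le \<sigma>' \<tau> \<and> orn_le \<tau> \<sigma> \<and> \<tau> \<noteq> \<sigma>' \<and> \<tau> \<noteq> \<sigma>)"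

definition Pop :: "'a set \<Rightarrow> ('a \<Rightarrow> 'a) \<Rightarrow> 'a \<Rightarrow> ('a \<Rightarrow> 'a set) \<Rightarrow> ('a \<Rightarrow> 'a set)" where
  "Pop V par r \<sigma> = (\<lambda>v. \<Inter>{\<sigma>' v | \<sigma>'. \<sigma>' = \<sigma> \<or> orn_covered V par r \<sigma>' \<sigma>})"

text \<open>sigma(x) is a bead of the v'-section of sigma(v).\<close>
definition is_bead :: "'a set \<Rightarrow> ('a \<Rightarrow> 'a) \<Rightarrow> 'a \<Rightarrow> ('a \<Rightarrow> 'a set) \<Rightarrow> 'a \<Rightarrow> 'a \<Rightarrow> 'a \<Rightarrow> bool" where
  "is_bead V par r \<sigma> v v' x \<longleftrightarrow> x \<in> V \<and> tle V par r x v' \<and> x \<notin> \<sigma> v \<and>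
     (\<forall>y \<in> V. tle V par r x y \<and> tle V par r y v' \<longrightarrow> y \<in> \<sigma> v \<or> \<sigma> y = {y})"

end

theory Submission
  imports Defs
begin

(*
  Every cover of an ornamentation sigma differs from sigma in a single ornament sigma(u), which it
  replaces by a maximal smaller admissible set; hence z stays in Pop(sigma)(u) iff no such maximal
  shrinking of sigma(u) loses z.

  (1) If y lies in Pop(rho)(u) but not in Pop(Pop(rho))(u), then Pop(rho)(y) = {y}. Let
  Pop(rho)(w) be the largest ornament strictly inside Pop(rho)(u) containing y. A maximal
  shrinking of Pop(rho)(u) that loses y also loses w, and it could be enlarged by cutting only
  below a node of Pop(rho)(u) that lies below w but outside Pop(rho)(w); so there is no such
  node. Since Pop(rho)(u) contains all of rho(w), this gives Pop(rho)(w) = rho(w), and Pop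
  shrinks every non-singleton ornament, so rho(w) = {w} and y = w. Consequently beads of
  Pop(rho) remain beads of Pop(Pop(rho)).

  (2) If v' is in Pop(Pop(rho))(v), removing the whole v'-section from Pop(rho)(v) is a legal
  shrinking, so the second Pop drops some node x of that section, and by (1) the ornament {x}
  becomes a new bead. Thus each application of Pop after the first adds a bead to the section.
*)

section \<open>The tree order\<close>

locale rtree =
  fixes V :: "'a set" and par :: "'a \<Rightarrow> 'a" and r :: 'a
  assumes rooted_tree: "rooted_tree V par r"
begin

abbreviation E :: "('a \<times> 'a) set" where "E \<equiv> tree_edges V par r"

abbreviation tree_le :: "'a \<Rightarrow> 'a \<Rightarrow> bool" (infix "\<preceq>" 50) where
  "x \<preceq> y \<equiv> tle V par r x y"

lemma finite_V: "finite V"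
  and par_in_V: "x \<in> V \<Longrightarrow> x \<noteq> r \<Longrightarrow> par x \<in> V"
  and reaches_root: "x \<in> V \<Longrightarrow> (x, r) \<in> E\<^sup>*"
  using rooted_tree unfolding rooted_tree_def by auto

lemma tree_edges_iff: "(a, b) \<in> E \<longleftrightarrow> a \<in> V \<and> a \<noteq> r \<and> b = par a"
  unfolding tree_edges_def by auto

lemma single_valued_tree_edges: "single_valued E"
  unfolding single_valued_def tree_edges_iff by auto

lemma tree_edges_subset: "E \<subseteq> V \<times> V"
  using par_in_V by (auto simp: tree_edges_iff)

lemma finite_tree_edges: "finite E"
  using finite_subset[OF tree_edges_subset] finite_V by blast

lemma acyclic_tree_edges: "acyclic E"
proof -
  have "(x, x) \<notin> E\<^sup>+" if "(x, r) \<in> E\<^sup>*" for x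
    using that
  proof (induction rule: converse_rtrancl_induct)
    case base
    show ?case by (auto dest: tranclD simp: tree_edges_iff)
  next
    case (step x a)
    show ?case
    proof
      assume "(x, x) \<in> E\<^sup>+"
      then obtain b where "(x, b) \<in> E" "(b, x) \<in> E\<^sup>*" by (auto dest: tranclD)
      with step.hyps(1) have "(a, x) \<in> E\<^sup>*"
        using single_valued_tree_edges by (auto dest: single_valuedD)
      then have "(a, a) \<in> E\<^sup>+" using step.hyps(1) by (rule rtrancl_into_trancl1)
      with step.IH show False ..
    qed
  qed
  moreover have "x \<in> V" if "(x, x) \<in> E\<^sup>+" for x
    using that tree_edges_subset by (auto dest: tranclD)
  ultimately show ?thesis
    unfolding acyclic_def using reaches_root by blast
qed

lemma tle_refl: "x \<in> V \<Longrightarrow> x \<preceq> x"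
  unfolding tle_def by auto

lemma tle_in_V: "x \<preceq> y \<Longrightarrow> x \<in> V" "x \<preceq> y \<Longrightarrow> y \<in> V"
  unfolding tle_def by auto

lemma tle_trans: "x \<preceq> y \<Longrightarrow> y \<preceq> z \<Longrightarrow> x \<preceq> z"
  unfolding tle_def by auto

lemma tle_less_iff_trancl: "x \<preceq> y \<and> x \<noteq> y \<longleftrightarrow> (x, y) \<in> E\<^sup>+"
proof
  assume "(x, y) \<in> E\<^sup>+"
  moreover have "x \<in> V" "y \<in> V"
    using calculation tree_edges_subset by (auto dest: tranclD tranclD2)
  moreover have "x \<noteq> y"
    using calculation acyclic_tree_edges by (auto simp: acyclic_def)
  ultimately show "x \<preceq> y \<and> x \<noteq> y"
    unfolding tle_def by auto
qed (auto simp: tle_def rtrancl_eq_or_trancl)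

lemma tle_antisym: "x \<preceq> y \<Longrightarrow> y \<preceq> x \<Longrightarrow> x = y"
  using tle_less_iff_trancl[of x y] tle_less_iff_trancl[of y x] acyclic_tree_edges
  unfolding acyclic_def by (meson trancl_trans)

lemma tle_linear_above: "z \<preceq> x \<Longrightarrow> z \<preceq> y \<Longrightarrow> x \<preceq> y \<or> y \<preceq> x"
  unfolding tle_def using single_valued_confluent[OF single_valued_tree_edges] by blast

lemma tle_edge: "(x, y) \<in> E \<Longrightarrow> x \<preceq> y"
  using tle_less_iff_trancl by blast

lemma par_tle_if_less:
  assumes "x \<preceq> y" "x \<noteq> y"
  shows "par x \<preceq> y"
proof -
  obtain z where "(x, z) \<in> E" "(z, y) \<in> E\<^sup>*"
    using assms tle_less_iff_trancl by (blast dest: tranclD)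
  moreover have "z = par x" "z \<in> V"
    using calculation(1) par_in_V by (auto simp: tree_edges_iff)
  ultimately show ?thesis
    using tle_in_V(2)[OF assms(1)] by (simp add: tle_def)
qed

lemma ex_tle_minimal:
  assumes "a \<in> A"
  shows "\<exists>m\<in>A. \<forall>b\<in>A. b \<preceq> m \<longrightarrow> b = m"
proof -
  have "wf (E\<^sup>+)"
    using finite_acyclic_wf[OF finite_tree_edges acyclic_tree_edges] by (rule wf_trancl)
  then obtain m where "m \<in> A" "\<And>b. (b, m) \<in> E\<^sup>+ \<Longrightarrow> b \<notin> A"
    using assms by (rule wfE_min) blast
  then show ?thesis
    using tle_less_iff_trancl by auto
qed

lemma ex_tle_maximal:
  assumes "a \<in> A"
  shows "\<exists>m\<in>A. \<forall>b\<in>A. m \<preceq> b \<longrightarrow> b = m"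
proof -
  have "wf ((E\<^sup>+)\<inverse>)"
    using finite_acyclic_wf_converse[OF finite_tree_edges acyclic_tree_edges] by (rule wf_converse_trancl)
  then obtain m where "m \<in> A" "\<And>b. (b, m) \<in> (E\<^sup>+)\<inverse> \<Longrightarrow> b \<notin> A"
    using assms by (rule wfE_min) blast
  then show ?thesis
    using tle_less_iff_trancl by auto
qed

section \<open>Ornaments as convex sets below their top\<close>

definition rooted_ornament :: "'a \<Rightarrow> 'a set \<Rightarrow> bool" where
  "rooted_ornament v S \<longleftrightarrow> v \<in> S \<and> (\<forall>x\<in>S. x \<preceq> v \<and> (\<forall>y. x \<preceq> y \<and> y \<preceq> v \<longrightarrow> y \<in> S))"

lemma sym_induced_adj: "sym (induced_adj V par r S)"
  unfolding sym_def induced_adj_def by auto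

lemma induced_walk_stays_below:
  assumes "(a, b) \<in> (induced_adj V par r S)\<^sup>*" "a \<preceq> y" "y \<notin> S"
  shows "b \<preceq> y"
  using assms(1)
proof (induction rule: rtrancl_induct)
  case base
  show ?case using assms(2) .
next
  case (step b c)
  from step.hyps(2) have "b \<in> S" "(b, c) \<in> E \<or> (c, b) \<in> E"
    unfolding induced_adj_def by auto
  moreover have "b \<noteq> y"
    using \<open>b \<in> S\<close> assms(3) by auto
  ultimately show ?case
    using step.IH par_tle_if_less[of b y] tle_edge[of c b] tle_trans
    by (auto simp: tree_edges_iff)
qed

lemma rooted_ornament_if_ornament:
  assumes "ornament V par r S" "maximal_elems V par r S = {v}"
  shows "rooted_ornament v S"
proof -
  have S_V: "S \<subseteq> V"
    and connected: "\<And>x y. x \<in> S \<Longrightarrow> y \<in> S \<Longrightarrow> (x, y) \<in> (induced_adj V par r S)\<^sup>*"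
    using assms(1) unfolding ornament_def by auto
  have "v \<in> S"
    using assms(2) unfolding maximal_elems_def by auto
  have below: "x \<preceq> v" if x: "x \<in> S" for x
  proof -
    obtain m where m: "m \<in> S" "x \<preceq> m" and m_max: "\<forall>b\<in>{a \<in> S. x \<preceq> a}. m \<preceq> b \<longrightarrow> b = m"
      using ex_tle_maximal[of x "{a \<in> S. x \<preceq> a}"] x S_V tle_refl by blast
    then have "m \<in> maximal_elems V par r S"
      unfolding maximal_elems_def using tle_trans by blast
    then show ?thesis
      using assms(2) m by auto
  qed
  have "y \<in> S" if "x \<in> S" "x \<preceq> y" "y \<preceq> v" for x y
  proof (rule ccontr)
    assume "y \<notin> S"
    then have "v \<preceq> y"
      using induced_walk_stays_below[OF connected[OF that(1) \<open>v \<in> S\<close>] that(2)] by blast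
    then show False
      using tle_antisym[OF that(3)] \<open>y \<notin> S\<close> \<open>v \<in> S\<close> by auto
  qed
  then show ?thesis
    unfolding rooted_ornament_def using \<open>v \<in> S\<close> below by blast
qed

lemma ornament_if_rooted_ornament:
  assumes "rooted_ornament v S"
  shows "ornament V par r S" "maximal_elems V par r S = {v}"
proof -
  have "v \<in> S" and below: "\<And>x. x \<in> S \<Longrightarrow> x \<preceq> v"
    and convex: "\<And>x y. x \<in> S \<Longrightarrow> x \<preceq> y \<Longrightarrow> y \<preceq> v \<Longrightarrow> y \<in> S"
    using assms unfolding rooted_ornament_def by blast+
  have walk_up: "(x, v) \<in> (induced_adj V par r S)\<^sup>*" if "x \<in> S" for x
  proof -
    have "(x, v) \<in> E\<^sup>*"
      using below[OF that] unfolding tle_def by auto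
    then show ?thesis
      using that
    proof (induction rule: converse_rtrancl_induct)
      case base
      show ?case by simp
    next
      case (step x a)
      have "a \<preceq> v"
        using step.hyps(2) tle_edge[OF step.hyps(1)] tle_in_V below[OF step.prems]
        unfolding tle_def by auto
      then have "a \<in> S"
        using convex[OF step.prems tle_edge[OF step.hyps(1)]] by blast
      then have "(x, a) \<in> induced_adj V par r S"
        using step.hyps(1) step.prems unfolding induced_adj_def by auto
      then show ?case
        using step.IH[OF \<open>a \<in> S\<close>] by (rule converse_rtrancl_into_rtrancl)
    qed
  qed
  have "(x, y) \<in> (induced_adj V par r S)\<^sup>*" if "x \<in> S" "y \<in> S" for x y
    using walk_up[OF that(1)] symD[OF sym_rtrancl[OF sym_induced_adj] walk_up[OF that(2)]]
    by (rule rtrancl_trans)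
  moreover have "S \<subseteq> V"
    using below tle_in_V by blast
  ultimately show "ornament V par r S"
    unfolding ornament_def using \<open>v \<in> S\<close> by blast
  show "maximal_elems V par r S = {v}"
    unfolding maximal_elems_def using \<open>v \<in> S\<close> below tle_antisym by blast
qed

lemma rooted_ornament_Un:
  "rooted_ornament u A \<Longrightarrow> rooted_ornament u B \<Longrightarrow> rooted_ornament u (A \<union> B)"
  unfolding rooted_ornament_def by blast

lemma rooted_ornament_remove_below:
  assumes "rooted_ornament u S" "\<not> u \<preceq> t"
  shows "rooted_ornament u {z \<in> S. \<not> z \<preceq> t}"
  using assms tle_trans unfolding rooted_ornament_def by blast

lemma rooted_ornament_INT:
  assumes "F \<noteq> {}" "\<And>S. S \<in> F \<Longrightarrow> rooted_ornament v S"
  shows "rooted_ornament v (\<Inter>F)"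
  using assms unfolding rooted_ornament_def by blast

lemma rooted_ornament_singleton: "u \<in> V \<Longrightarrow> rooted_ornament u {u}"
  unfolding rooted_ornament_def using tle_refl tle_antisym by blast

abbreviation orns :: "('a \<Rightarrow> 'a set) set" where
  "orns \<equiv> ornamentations V par r"

lemma ornamentations_iff:
  "\<sigma> \<in> orns \<longleftrightarrow> (\<forall>v\<in>V. rooted_ornament v (\<sigma> v)) \<and>
     (\<forall>v\<in>V. \<forall>w\<in>V. \<sigma> v \<subseteq> \<sigma> w \<or> \<sigma> w \<subseteq> \<sigma> v \<or> \<sigma> v \<inter> \<sigma> w = {}) \<and>
     (\<forall>v. v \<notin> V \<longrightarrow> \<sigma> v = {})"
proof -
  have "ornament V par r S \<and> maximal_elems V par r S = {v} \<longleftrightarrow> rooted_ornament v S" for v S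
    using rooted_ornament_if_ornament ornament_if_rooted_ornament by blast
  then show ?thesis
    unfolding ornamentations_def by simp
qed

lemma ornamentation_rooted: "\<sigma> \<in> orns \<Longrightarrow> v \<in> V \<Longrightarrow> rooted_ornament v (\<sigma> v)"
  unfolding ornamentations_iff by blast

lemma ornamentation_outside: "\<sigma> \<in> orns \<Longrightarrow> v \<notin> V \<Longrightarrow> \<sigma> v = {}"
  unfolding ornamentations_iff by blast

lemma ornamentation_self: "\<sigma> \<in> orns \<Longrightarrow> v \<in> V \<Longrightarrow> v \<in> \<sigma> v"
  using ornamentation_rooted unfolding rooted_ornament_def by blast

lemma ornamentation_below: "\<sigma> \<in> orns \<Longrightarrow> x \<in> \<sigma> v \<Longrightarrow> x \<preceq> v"
  using ornamentation_rooted ornamentation_outside unfolding rooted_ornament_def by blast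

lemma ornamentation_convex: "\<sigma> \<in> orns \<Longrightarrow> x \<in> \<sigma> v \<Longrightarrow> x \<preceq> y \<Longrightarrow> y \<preceq> v \<Longrightarrow> y \<in> \<sigma> v"
  using ornamentation_rooted ornamentation_outside unfolding rooted_ornament_def by blast

lemma ornamentation_laminar:
  "\<sigma> \<in> orns \<Longrightarrow> \<sigma> v \<subseteq> \<sigma> w \<or> \<sigma> w \<subseteq> \<sigma> v \<or> \<sigma> v \<inter> \<sigma> w = {}"
  unfolding ornamentations_iff by (cases "v \<in> V"; cases "w \<in> V") auto

lemma ornamentation_nested:
  assumes "\<sigma> \<in> orns" "x \<in> \<sigma> v"
  shows "\<sigma> x \<subseteq> \<sigma> v"
proof -
  have "x \<in> V" "v \<in> V"
    using ornamentation_below[OF assms] tle_in_V by auto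
  then have "x \<in> \<sigma> x" "v \<in> \<sigma> v"
    using ornamentation_self[OF assms(1)] by auto
  moreover have "\<sigma> v \<subseteq> \<sigma> x \<Longrightarrow> x = v"
    using ornamentation_below[OF assms(1)] tle_antisym \<open>v \<in> \<sigma> v\<close> assms(2) by blast
  ultimately show ?thesis
    using ornamentation_laminar[OF assms(1), of x v] assms(2) by blast
qed

lemma ornamentation_update_shrink:
  assumes \<sigma>: "\<sigma> \<in> orns" and A: "rooted_ornament u A" "A \<subseteq> \<sigma> u"
    and inner: "\<And>x. x \<in> \<sigma> u \<Longrightarrow> x \<noteq> u \<Longrightarrow> \<sigma> x \<subseteq> A \<or> \<sigma> x \<inter> A = {}"
  shows "\<sigma>(u := A) \<in> orns"
proof -
  have "u \<in> V"
    using A(1) tle_in_V unfolding rooted_ornament_def by blast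
  have "A \<subseteq> \<sigma> w \<or> \<sigma> w \<subseteq> A \<or> A \<inter> \<sigma> w = {}" if "w \<in> V" "w \<noteq> u" for w
  proof (cases "w \<in> \<sigma> u")
    case True
    then show ?thesis using inner[OF True that(2)] by blast
  next
    case False
    then have "\<not> \<sigma> w \<subseteq> \<sigma> u"
      using ornamentation_self[OF \<sigma> that(1)] by blast
    then show ?thesis
      using ornamentation_laminar[OF \<sigma>, of u w] A(2) by blast
  qed
  then show ?thesis
    using \<sigma> A(1) \<open>u \<in> V\<close> unfolding ornamentations_iff by (simp add: Int_commute) blast
qed

lemma ornamentation_update_singleton:
  assumes "\<sigma> \<in> orns" "u \<in> V"
  shows "\<sigma>(u := {u}) \<in> orns"
proof (rule ornamentation_update_shrink[OF assms(1) rooted_ornament_singleton[OF assms(2)]])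
  show "{u} \<subseteq> \<sigma> u"
    using ornamentation_self[OF assms] by blast
  show "\<sigma> x \<subseteq> {u} \<or> \<sigma> x \<inter> {u} = {}" if "x \<in> \<sigma> u" "x \<noteq> u" for x
    using that ornamentation_below[OF assms(1)] tle_antisym by blast
qed

definition cut_point :: "('a \<Rightarrow> 'a set) \<Rightarrow> 'a \<Rightarrow> 'a \<Rightarrow> bool" where
  "cut_point \<sigma> u t \<longleftrightarrow> t \<in> \<sigma> u \<and> t \<noteq> u \<and> (\<forall>x\<in>\<sigma> u. t \<in> \<sigma> x \<longrightarrow> x = t \<or> x = u)"

lemma ornamentation_update_cut:
  assumes \<sigma>: "\<sigma> \<in> orns" and \<sigma>B: "\<sigma>(u := B) \<in> orns" and "B \<subseteq> \<sigma> u"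
    and cut: "cut_point \<sigma> u t"
  shows "\<sigma>(u := B \<union> {z \<in> \<sigma> u. \<not> z \<preceq> t}) \<in> orns"
proof (rule ornamentation_update_shrink[OF \<sigma>])
  let ?C = "{z \<in> \<sigma> u. \<not> z \<preceq> t}"
  have t: "t \<in> \<sigma> u" "t \<noteq> u"
    and t_only_inner: "\<And>x. x \<in> \<sigma> u \<Longrightarrow> t \<in> \<sigma> x \<Longrightarrow> x = t \<or> x = u"
    using cut unfolding cut_point_def by auto
  have "u \<in> V"
    using ornamentation_below[OF \<sigma> t(1)] tle_in_V by blast
  have "\<not> u \<preceq> t"
    using ornamentation_below[OF \<sigma> t(1)] t(2) tle_antisym by blast
  have "rooted_ornament u B"
    using ornamentation_rooted[OF \<sigma>B \<open>u \<in> V\<close>] by simp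
  then show "rooted_ornament u (B \<union> ?C)"
    using rooted_ornament_Un rooted_ornament_remove_below[OF ornamentation_rooted[OF \<sigma> \<open>u \<in> V\<close>] \<open>\<not> u \<preceq> t\<close>]
    by blast
  show "B \<union> ?C \<subseteq> \<sigma> u"
    using \<open>B \<subseteq> \<sigma> u\<close> by blast
  fix x
  assume x: "x \<in> \<sigma> u" "x \<noteq> u"
  have x_u: "x \<preceq> u"
    using ornamentation_below[OF \<sigma> x(1)] .
  have "u \<notin> \<sigma> x"
    using ornamentation_below[OF \<sigma>] x_u x(2) tle_antisym by blast
  then have B_cases: "\<sigma> x \<subseteq> B \<or> \<sigma> x \<inter> B = {}"
    using ornamentation_laminar[OF \<sigma>B, of u x] ornamentation_self[OF \<sigma>B \<open>u \<in> V\<close>] x(2) by auto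
  have C_cases: "\<sigma> x \<subseteq> ?C \<or> \<sigma> x \<inter> ?C = {}"
  proof (cases "x \<preceq> t")
    case True
    then show ?thesis
      using ornamentation_below[OF \<sigma>, of _ x] tle_trans by blast
  next
    case False
    have "\<not> z \<preceq> t" if "z \<in> \<sigma> x" for z
    proof
      assume "z \<preceq> t"
      then have "t \<preceq> x"
        using tle_linear_above ornamentation_below[OF \<sigma> that] False by blast
      then have "t \<in> \<sigma> x"
        using ornamentation_convex[OF \<sigma> that \<open>z \<preceq> t\<close>] by blast
      then show False
        using t_only_inner[OF x(1)] x(2) False tle_refl tle_in_V(1)[OF \<open>t \<preceq> x\<close>] by blast
    qed
    then show ?thesis
      using ornamentation_nested[OF \<sigma> x(1)] by blast
  qed
  show "\<sigma> x \<subseteq> B \<union> ?C \<or> \<sigma> x \<inter> (B \<union> ?C) = {}"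
    using B_cases C_cases by blast
qed

section \<open>Covers and Pop\<close>

abbreviation covered :: "('a \<Rightarrow> 'a set) \<Rightarrow> ('a \<Rightarrow> 'a set) \<Rightarrow> bool" (infix "\<lessdot>" 50) where
  "\<sigma>' \<lessdot> \<sigma> \<equiv> orn_covered V par r \<sigma>' \<sigma>"

lemma orn_le_iff_le: "orn_le \<sigma> \<tau> \<longleftrightarrow> \<sigma> \<le> \<tau>"
  unfolding orn_le_def le_fun_def by simp

lemma covered_iff:
  "\<sigma>' \<lessdot> \<sigma> \<longleftrightarrow> \<sigma>' \<in> orns \<and> \<sigma> \<in> orns \<and> \<sigma>' < \<sigma> \<and>
     (\<forall>\<rho>\<in>orns. \<sigma>' \<le> \<rho> \<longrightarrow> \<rho> \<le> \<sigma> \<longrightarrow> \<rho> = \<sigma>' \<or> \<rho> = \<sigma>)"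
  unfolding orn_covered_def orn_le_iff_le less_le by meson

lemma finite_ornamentations: "finite orns"
proof (rule finite_subset)
  show "orns \<subseteq> {f. \<forall>x. (x \<in> V \<longrightarrow> f x \<in> Pow V) \<and> (x \<notin> V \<longrightarrow> f x = {})}"
  proof (intro subsetI CollectI allI conjI impI)
    fix \<sigma> x
    assume "\<sigma> \<in> orns"
    then show "\<sigma> x \<in> Pow V"
      using ornamentation_below tle_in_V by blast
    show "x \<notin> V \<Longrightarrow> \<sigma> x = {}"
      using ornamentation_outside[OF \<open>\<sigma> \<in> orns\<close>] .
  qed
  show "finite {f. \<forall>x. (x \<in> V \<longrightarrow> f x \<in> Pow V) \<and> (x \<notin> V \<longrightarrow> f x = {})}"
    by (rule finite_set_of_finite_funs[OF finite_V]) (simp add: finite_V)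
qed

lemma ex_covered_above:
  assumes "\<sigma> \<in> orns" "\<tau> \<in> orns" "\<tau> < \<sigma>"
  shows "\<exists>\<sigma>'. \<sigma>' \<lessdot> \<sigma> \<and> \<tau> \<le> \<sigma>'"
proof -
  obtain \<sigma>' where \<sigma>': "\<sigma>' \<in> orns" "\<tau> \<le> \<sigma>'" "\<sigma>' < \<sigma>"
    and maximal: "\<forall>\<rho>\<in>{\<rho> \<in> orns. \<tau> \<le> \<rho> \<and> \<rho> < \<sigma>}. \<sigma>' \<le> \<rho> \<longrightarrow> \<sigma>' = \<rho>"
    using finite_has_maximal2[of "{\<rho> \<in> orns. \<tau> \<le> \<rho> \<and> \<rho> < \<sigma>}" \<tau>] finite_ornamentations assms
    by auto
  have "\<rho> = \<sigma>' \<or> \<rho> = \<sigma>" if "\<rho> \<in> orns" "\<sigma>' \<le> \<rho>" "\<rho> \<le> \<sigma>" for \<rho>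
    using maximal that \<sigma>'(2) order_trans[OF \<sigma>'(2)] by (auto simp: less_le)
  then have "\<sigma>' \<lessdot> \<sigma>"
    unfolding covered_iff using \<sigma>' assms(1) by blast
  then show ?thesis
    using \<sigma>'(2) by blast
qed

lemma covered_update_maximal:
  assumes "\<sigma>(u := A) \<lessdot> \<sigma>" "\<sigma>(u := A') \<in> orns" "A \<subseteq> A'" "A' \<subseteq> \<sigma> u"
  shows "A' = A \<or> A' = \<sigma> u"
proof -
  have "\<sigma>(u := A) \<le> \<sigma>(u := A')" "\<sigma>(u := A') \<le> \<sigma>"
    using assms(3,4) by (auto simp: le_fun_def)
  then have "\<sigma>(u := A') = \<sigma>(u := A) \<or> \<sigma>(u := A') = \<sigma>"
    using assms(1,2) unfolding covered_iff by blast
  then show ?thesis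
    by (metis fun_upd_same)
qed

lemma covered_eq_update:
  assumes "\<sigma>' \<lessdot> \<sigma>"
  shows "\<exists>c. \<sigma>' = \<sigma>(c := \<sigma>' c)"
proof -
  have \<sigma>: "\<sigma> \<in> orns" and \<sigma>': "\<sigma>' \<in> orns" and "\<sigma>' < \<sigma>"
    using assms unfolding covered_iff by auto
  then obtain d where "\<sigma>' d \<noteq> \<sigma> d"
    by (auto simp: less_le fun_eq_iff)
  then obtain c where c: "\<sigma>' c \<noteq> \<sigma> c" and c_min: "\<And>b. \<sigma>' b \<noteq> \<sigma> b \<Longrightarrow> b \<preceq> c \<Longrightarrow> b = c"
    using ex_tle_minimal[of d "{b. \<sigma>' b \<noteq> \<sigma> b}"] by auto
  have "c \<in> V"
    using c ornamentation_outside[OF \<sigma>] ornamentation_outside[OF \<sigma>'] by auto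
  have "\<sigma>' c \<subseteq> \<sigma> c"
    using \<open>\<sigma>' < \<sigma>\<close> by (auto simp: less_le le_fun_def)
  have "\<sigma>(c := \<sigma>' c) \<in> orns"
  proof (rule ornamentation_update_shrink[OF \<sigma> ornamentation_rooted[OF \<sigma>' \<open>c \<in> V\<close>] \<open>\<sigma>' c \<subseteq> \<sigma> c\<close>])
    fix x
    assume x: "x \<in> \<sigma> c" "x \<noteq> c"
    then have "\<sigma>' x = \<sigma> x"
      using c_min ornamentation_below[OF \<sigma>] by blast
    moreover have "c \<notin> \<sigma> x"
      using x ornamentation_below[OF \<sigma>] tle_antisym by blast
    ultimately show "\<sigma> x \<subseteq> \<sigma>' c \<or> \<sigma> x \<inter> \<sigma>' c = {}"
      using ornamentation_laminar[OF \<sigma>', of x c] ornamentation_self[OF \<sigma>' \<open>c \<in> V\<close>] by auto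
  qed
  moreover have "\<sigma>' \<le> \<sigma>(c := \<sigma>' c)" "\<sigma>(c := \<sigma>' c) \<le> \<sigma>"
    using \<open>\<sigma>' < \<sigma>\<close> by (auto simp: less_le le_fun_def)
  moreover have "\<sigma>(c := \<sigma>' c) \<noteq> \<sigma>"
    using c by (metis fun_upd_same)
  ultimately have "\<sigma>(c := \<sigma>' c) = \<sigma>'"
    using assms unfolding covered_iff by blast
  then show ?thesis
    by metis
qed

abbreviation pop :: "('a \<Rightarrow> 'a set) \<Rightarrow> 'a \<Rightarrow> 'a set" where
  "pop \<equiv> Pop V par r"

lemma Pop_eq_INT: "pop \<sigma> = (\<lambda>v. \<Inter>\<rho>\<in>{\<rho>. \<rho> = \<sigma> \<or> \<rho> \<lessdot> \<sigma>}. \<rho> v)"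
  by (simp only: Pop_def setcompr_eq_image)

lemma Pop_subset: "pop \<sigma> v \<subseteq> \<sigma> v"
  unfolding Pop_eq_INT by blast

lemma Pop_subset_covered: "\<rho> \<lessdot> \<sigma> \<Longrightarrow> pop \<sigma> v \<subseteq> \<rho> v"
  unfolding Pop_eq_INT by blast

lemma ornamentations_INT:
  assumes F: "F \<subseteq> orns" and "\<sigma> \<in> F"
  shows "(\<lambda>v. \<Inter>\<rho>\<in>F. \<rho> v) \<in> orns"
proof -
  let ?I = "\<lambda>v. \<Inter>\<rho>\<in>F. \<rho> v"
  have \<sigma>: "\<sigma> \<in> orns"
    using assms by blast
  have below: "x \<preceq> v" if "x \<in> ?I v" for x v
    using ornamentation_below[OF \<sigma> INT_D[OF that \<open>\<sigma> \<in> F\<close>]] .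
  have rooted: "rooted_ornament v (?I v)" if "v \<in> V" for v
    using rooted_ornament_INT[of "(\<lambda>\<rho>. \<rho> v) ` F" v] \<open>\<sigma> \<in> F\<close> ornamentation_rooted[OF subsetD[OF F] that]
    by blast
  have mono: "?I v \<subseteq> ?I w" if z: "z \<in> ?I v" "z \<in> ?I w" and "v \<preceq> w" for z v w
  proof -
    have "\<rho> v \<subseteq> \<rho> w" if "\<rho> \<in> F" for \<rho>
    proof -
      have \<rho>: "\<rho> \<in> orns"
        using that F by blast
      have "v \<in> \<rho> w"
        using ornamentation_convex[OF \<rho> INT_D[OF z(2) that]
            ornamentation_below[OF \<rho> INT_D[OF z(1) that]] \<open>v \<preceq> w\<close>] .
      then show ?thesis
        by (rule ornamentation_nested[OF \<rho>])
    qed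
    then show ?thesis
      by (rule INT_anti_mono[OF order_refl])
  qed
  have laminar: "?I v \<subseteq> ?I w \<or> ?I w \<subseteq> ?I v \<or> ?I v \<inter> ?I w = {}" for v w
  proof (cases "?I v \<inter> ?I w = {}")
    case False
    then obtain z where z: "z \<in> ?I v" "z \<in> ?I w"
      by (meson IntD1 IntD2 ex_in_conv)
    have "v \<preceq> w \<or> w \<preceq> v"
      using tle_linear_above[OF below[OF z(1)] below[OF z(2)]] .
    then show ?thesis
      using mono[OF z] mono[OF z(2,1)] by meson
  qed simp
  have outside: "?I v = {}" if "v \<notin> V" for v
    using INT_lower[OF \<open>\<sigma> \<in> F\<close>, of "\<lambda>\<rho>. \<rho> v"] ornamentation_outside[OF \<sigma> that] by simp
  show ?thesis
    unfolding ornamentations_iff by (intro conjI ballI allI impI rooted laminar outside)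
qed

lemma Pop_in_ornamentations: "\<sigma> \<in> orns \<Longrightarrow> pop \<sigma> \<in> orns"
  unfolding Pop_eq_INT
  by (rule ornamentations_INT[of _ \<sigma>]) (auto simp: covered_iff)

lemma funpow_Pop_in_ornamentations: "\<sigma> \<in> orns \<Longrightarrow> (pop ^^ n) \<sigma> \<in> orns"
  by (induction n) (auto intro: Pop_in_ornamentations)

lemma mem_Pop_iff: "z \<in> pop \<sigma> u \<longleftrightarrow> z \<in> \<sigma> u \<and> (\<forall>A. \<sigma>(u := A) \<lessdot> \<sigma> \<longrightarrow> z \<in> A)"
proof
  assume "z \<in> pop \<sigma> u"
  then show "z \<in> \<sigma> u \<and> (\<forall>A. \<sigma>(u := A) \<lessdot> \<sigma> \<longrightarrow> z \<in> A)"
    using Pop_subset Pop_subset_covered by fastforce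
next
  assume z: "z \<in> \<sigma> u \<and> (\<forall>A. \<sigma>(u := A) \<lessdot> \<sigma> \<longrightarrow> z \<in> A)"
  have "z \<in> \<rho> u" if cov: "\<rho> \<lessdot> \<sigma>" for \<rho>
  proof -
    obtain c where c: "\<rho> = \<sigma>(c := \<rho> c)"
      using covered_eq_update[OF cov] by blast
    show ?thesis
    proof (cases "c = u")
      case True
      then show ?thesis
        using z cov c by metis
    next
      case False
      then show ?thesis
        using z c by (metis fun_upd_other)
    qed
  qed
  then show "z \<in> pop \<sigma> u"
    unfolding Pop_eq_INT using z by blast
qed

lemma Pop_drops_outside_shrinking:
  assumes \<sigma>: "\<sigma> \<in> orns" and \<sigma>A: "\<sigma>(u := A) \<in> orns" and "A \<subset> \<sigma> u"
  shows "\<exists>x \<in> \<sigma> u - A. x \<notin> pop \<sigma> u"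
proof -
  have "\<sigma>(u := A) < \<sigma>"
    using \<open>A \<subset> \<sigma> u\<close> by (auto simp: less_le le_fun_def dest: fun_cong[of _ _ u])
  then obtain \<rho> where cov: "\<rho> \<lessdot> \<sigma>" and above: "\<sigma>(u := A) \<le> \<rho>"
    using ex_covered_above[OF \<sigma> \<sigma>A] by blast
  have "\<rho> \<le> \<sigma>" "\<rho> \<noteq> \<sigma>"
    using cov unfolding covered_iff by (auto simp: less_le)
  have "\<rho> x = \<sigma> x" if "x \<noteq> u" for x
    using le_funD[OF above, of x] le_funD[OF \<open>\<rho> \<le> \<sigma>\<close>, of x] that by simp
  then have "\<rho> u \<noteq> \<sigma> u"
    using \<open>\<rho> \<noteq> \<sigma>\<close> by (metis ext)
  then obtain x where "x \<in> \<sigma> u" "x \<notin> \<rho> u"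
    using \<open>\<rho> \<le> \<sigma>\<close> by (auto simp: le_fun_def)
  moreover have "A \<subseteq> \<rho> u"
    using le_funD[OF above, of u] by simp
  ultimately show ?thesis
    using Pop_subset_covered[OF cov, of u] by blast
qed

lemma Pop_neq_if_not_singleton:
  assumes "\<sigma> \<in> orns" "w \<in> V" "\<sigma> w \<noteq> {w}"
  shows "pop \<sigma> w \<noteq> \<sigma> w"
  using Pop_drops_outside_shrinking[OF assms(1) ornamentation_update_singleton[OF assms(1,2)]]
    ornamentation_self[OF assms(1,2)] assms(3)
  by blast

lemma Pop_singleton:
  assumes "\<sigma> \<in> orns" "\<sigma> y = {y}"
  shows "pop \<sigma> y = {y}"
proof -
  have "y \<in> V"
    using assms ornamentation_outside by fastforce
  then show ?thesis
    using ornamentation_self[OF Pop_in_ornamentations[OF assms(1)]] Pop_subset[of \<sigma> y] assms(2)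
    by blast
qed

lemma sub_ornament_subset_Pop:
  assumes \<sigma>: "\<sigma> \<in> orns" and z: "z \<in> pop \<sigma> u" and x: "x \<in> \<sigma> u" "x \<noteq> u" "z \<in> \<sigma> x"
  shows "\<sigma> x \<subseteq> pop \<sigma> u"
proof
  fix y
  assume "y \<in> \<sigma> x"
  have "y \<in> A" if cov: "\<sigma>(u := A) \<lessdot> \<sigma>" for A
  proof -
    have \<sigma>A: "\<sigma>(u := A) \<in> orns"
      using cov unfolding covered_iff by blast
    have "z \<in> A"
      using z cov unfolding mem_Pop_iff by blast
    then have "x \<in> A"
      using ornamentation_convex[OF \<sigma>A, of z u x] ornamentation_below[OF \<sigma>] x by simp
    then have "\<sigma> x \<subseteq> A"
      using ornamentation_nested[OF \<sigma>A, of x u] x(2) by simp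
    then show ?thesis
      using \<open>y \<in> \<sigma> x\<close> by blast
  qed
  moreover have "y \<in> \<sigma> u"
    using ornamentation_nested[OF \<sigma> x(1)] \<open>y \<in> \<sigma> x\<close> by blast
  ultimately show "y \<in> pop \<sigma> u"
    unfolding mem_Pop_iff by blast
qed

section \<open>Growth of beads\<close>

lemma ex_maximal_block:
  assumes \<sigma>: "\<sigma> \<in> orns" and "y \<in> \<sigma> u" "y \<noteq> u"
  obtains w where "w \<in> \<sigma> u" "w \<noteq> u" "y \<in> \<sigma> w"
    and "\<And>x. x \<in> \<sigma> u \<Longrightarrow> x \<noteq> u \<Longrightarrow> y \<in> \<sigma> x \<Longrightarrow> w \<preceq> x \<Longrightarrow> x = w"
proof -
  have "y \<in> \<sigma> y"
    using ornamentation_self[OF \<sigma>] ornamentation_below[OF \<sigma> \<open>y \<in> \<sigma> u\<close>] tle_in_V by blast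
  then show ?thesis
    using ex_tle_maximal[of y "{x \<in> \<sigma> u. x \<noteq> u \<and> y \<in> \<sigma> x}"] assms that by auto
qed

lemma ex_cut_point_outside_block:
  assumes \<sigma>: "\<sigma> \<in> orns" and w: "w \<in> \<sigma> u" "w \<noteq> u" "y \<in> \<sigma> w"
    and w_max: "\<And>x. x \<in> \<sigma> u \<Longrightarrow> x \<noteq> u \<Longrightarrow> y \<in> \<sigma> x \<Longrightarrow> w \<preceq> x \<Longrightarrow> x = w"
    and t: "t \<in> \<sigma> u" "t \<preceq> w" "t \<notin> \<sigma> w"
  shows "\<exists>t'. cut_point \<sigma> u t' \<and> t' \<preceq> w \<and> t' \<notin> \<sigma> w"
proof -
  obtain t' where t': "t' \<in> \<sigma> u" "t' \<preceq> w" "t' \<notin> \<sigma> w"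
    and t'_max: "\<And>b. b \<in> \<sigma> u \<Longrightarrow> b \<preceq> w \<Longrightarrow> b \<notin> \<sigma> w \<Longrightarrow> t' \<preceq> b \<Longrightarrow> b = t'"
    using ex_tle_maximal[of t "{b \<in> \<sigma> u. b \<preceq> w \<and> b \<notin> \<sigma> w}"] t by auto
  have "t' \<noteq> u"
    using t'(2) ornamentation_below[OF \<sigma> w(1)] tle_antisym w(2) by blast
  moreover have "x = t' \<or> x = u" if x: "x \<in> \<sigma> u" "t' \<in> \<sigma> x" for x
  proof (rule ccontr)
    assume "\<not> (x = t' \<or> x = u)"
    have "t' \<preceq> x"
      using ornamentation_below[OF \<sigma> x(2)] .
    then consider "w \<preceq> x" | "x \<preceq> w"
      using tle_linear_above t'(2) by blast
    then show False
    proof cases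
      case 1
      then have "w \<in> \<sigma> x"
        using ornamentation_convex[OF \<sigma> x(2) t'(2)] by blast
      then have "y \<in> \<sigma> x"
        using ornamentation_nested[OF \<sigma>] w(3) by blast
      then have "x = w"
        using w_max[OF x(1) _ _ 1] \<open>\<not> (x = t' \<or> x = u)\<close> by blast
      then show False
        using x(2) t'(3) by simp
    next
      case 2
      have "x \<notin> \<sigma> w"
        using ornamentation_nested[OF \<sigma>] x(2) t'(3) by blast
      then show False
        using t'_max[OF x(1) 2 _ \<open>t' \<preceq> x\<close>] \<open>\<not> (x = t' \<or> x = u)\<close> by blast
    qed
  qed
  ultimately show ?thesis
    unfolding cut_point_def using t' by blast
qed

lemma mem_Pop_if_block_has_gap:
  assumes \<sigma>: "\<sigma> \<in> orns" and w: "w \<in> \<sigma> u" "w \<noteq> u" "y \<in> \<sigma> w"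
    and w_max: "\<And>x. x \<in> \<sigma> u \<Longrightarrow> x \<noteq> u \<Longrightarrow> y \<in> \<sigma> x \<Longrightarrow> w \<preceq> x \<Longrightarrow> x = w"
    and t: "t \<in> \<sigma> u" "t \<preceq> w" "t \<notin> \<sigma> w"
  shows "y \<in> pop \<sigma> u"
proof -
  obtain t' where cut: "cut_point \<sigma> u t'" and t': "t' \<preceq> w" "t' \<notin> \<sigma> w"
    using ex_cut_point_outside_block[OF assms] by blast
  have "y \<in> A" if cov: "\<sigma>(u := A) \<lessdot> \<sigma>" for A
  proof (rule ccontr)
    assume "y \<notin> A"
    have \<sigma>A: "\<sigma>(u := A) \<in> orns" and "A \<subseteq> \<sigma> u"
      using cov le_funD[of "\<sigma>(u := A)" \<sigma> u] unfolding covered_iff by (auto simp: less_le)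
    have "w \<notin> A"
      using ornamentation_nested[OF \<sigma>A, of w u] w(2,3) \<open>y \<notin> A\<close> by auto
    then have "t' \<notin> A"
      using ornamentation_convex[OF \<sigma>A, of t' u w] t'(1) ornamentation_below[OF \<sigma> w(1)] by auto
    \<comment> \<open>cutting \<sigma> u only below t' keeps w but loses t': strictly between the cover and \<sigma>\<close>
    let ?A' = "A \<union> {z \<in> \<sigma> u. \<not> z \<preceq> t'}"
    have "\<sigma>(u := ?A') \<in> orns"
      using ornamentation_update_cut[OF \<sigma> \<sigma>A \<open>A \<subseteq> \<sigma> u\<close> cut] .
    then have "?A' = A \<or> ?A' = \<sigma> u"
      using covered_update_maximal[OF cov] \<open>A \<subseteq> \<sigma> u\<close> by blast
    moreover have "\<not> w \<preceq> t'"
      using t' tle_antisym ornamentation_self[OF \<sigma>] tle_in_V by blast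
    moreover have "t' \<in> \<sigma> u" "t' \<preceq> t'"
      using cut tle_refl tle_in_V(1)[OF t'(1)] unfolding cut_point_def by auto
    ultimately show False
      using \<open>w \<notin> A\<close> \<open>t' \<notin> A\<close> w(1) by blast
  qed
  moreover have "y \<in> \<sigma> u"
    using ornamentation_nested[OF \<sigma> w(1)] w(3) by blast
  ultimately show ?thesis
    unfolding mem_Pop_iff by blast
qed

lemma Pop_Pop_removed_singleton:
  assumes \<rho>: "\<rho> \<in> orns" and y: "y \<in> pop \<rho> u" "y \<notin> pop (pop \<rho>) u"
  shows "pop \<rho> y = {y}"
proof -
  define \<tau> where "\<tau> = pop \<rho>"
  have \<tau>: "\<tau> \<in> orns" and "\<tau> \<le> \<rho>"
    unfolding \<tau>_def using Pop_in_ornamentations[OF \<rho>] Pop_subset by (auto simp: le_fun_def)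
  have "y \<in> \<tau> u" "y \<notin> pop \<tau> u"
    using y unfolding \<tau>_def by auto
  have "u \<in> V"
    using ornamentation_below[OF \<tau> \<open>y \<in> \<tau> u\<close>] tle_in_V by auto
  then have "y \<noteq> u"
    using \<open>y \<notin> pop \<tau> u\<close> ornamentation_self[OF Pop_in_ornamentations[OF \<tau>]] by blast
  then obtain w where w: "w \<in> \<tau> u" "w \<noteq> u" "y \<in> \<tau> w"
    and w_max: "\<And>x. x \<in> \<tau> u \<Longrightarrow> x \<noteq> u \<Longrightarrow> y \<in> \<tau> x \<Longrightarrow> w \<preceq> x \<Longrightarrow> x = w"
    using ex_maximal_block[OF \<tau> \<open>y \<in> \<tau> u\<close>] by blast
  have "w \<in> V"
    using ornamentation_below[OF \<tau> w(1)] tle_in_V by blast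
  have "\<rho> w \<subseteq> \<tau> u"
    using sub_ornament_subset_Pop[OF \<rho> y(1)] w le_funD[OF \<open>\<tau> \<le> \<rho>\<close>] unfolding \<tau>_def by blast
  have "\<rho> w \<subseteq> \<tau> w"
  proof
    fix t
    assume "t \<in> \<rho> w"
    show "t \<in> \<tau> w"
    proof (rule ccontr)
      assume "t \<notin> \<tau> w"
      moreover have "t \<in> \<tau> u" "t \<preceq> w"
        using \<open>t \<in> \<rho> w\<close> \<open>\<rho> w \<subseteq> \<tau> u\<close> ornamentation_below[OF \<rho>] by auto
      ultimately have "y \<in> pop \<tau> u"
        using mem_Pop_if_block_has_gap[OF \<tau> w w_max] by blast
      with \<open>y \<notin> pop \<tau> u\<close> show False ..
    qed
  qed
  then have "pop \<rho> w = \<rho> w"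
    using Pop_subset[of \<rho> w] unfolding \<tau>_def by blast
  then have "\<rho> w = {w}"
    using Pop_neq_if_not_singleton[OF \<rho> \<open>w \<in> V\<close>] by blast
  then have "\<tau> w = {w}"
    using le_funD[OF \<open>\<tau> \<le> \<rho>\<close>, of w] ornamentation_self[OF \<tau> \<open>w \<in> V\<close>] by auto
  then show ?thesis
    using w(3) unfolding \<tau>_def by simp
qed

lemma mem_Pop_Pop_or_singleton:
  assumes "\<rho> \<in> orns" "y \<in> pop \<rho> v"
  shows "y \<in> pop (pop \<rho>) v \<or> pop (pop \<rho>) y = {y}"
  using Pop_Pop_removed_singleton[OF assms] Pop_singleton[OF Pop_in_ornamentations[OF assms(1)]]
  by blast

lemma is_bead_Pop_Pop:
  assumes \<rho>: "\<rho> \<in> orns" and bead: "is_bead V par r (pop \<rho>) v v' x"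
  shows "is_bead V par r (pop (pop \<rho>)) v v' x"
proof -
  have "y \<in> pop (pop \<rho>) v \<or> pop (pop \<rho>) y = {y}" if "y \<in> pop \<rho> v \<or> pop \<rho> y = {y}" for y
    using that mem_Pop_Pop_or_singleton[OF \<rho>] Pop_singleton[OF Pop_in_ornamentations[OF \<rho>]] by blast
  then show ?thesis
    using bead Pop_subset[of "pop \<rho>" v] unfolding is_bead_def by blast
qed

lemma children_tle:
  assumes "v' \<in> children V par r v"
  shows "v' \<preceq> v" "v' \<noteq> v" "\<And>w. v' \<preceq> w \<Longrightarrow> w \<preceq> v \<Longrightarrow> w = v' \<or> w = v"
  using assms tle_in_V unfolding children_def by blast+

lemma cut_point_child:
  assumes "\<sigma> \<in> orns" "v' \<in> children V par r v" "v' \<in> \<sigma> v"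
  shows "cut_point \<sigma> v v'"
  unfolding cut_point_def
  using assms children_tle[OF assms(2)] ornamentation_below[OF assms(1)] by blast

lemma ex_new_bead_Pop_Pop:
  assumes \<rho>: "\<rho> \<in> orns" and child: "v' \<in> children V par r v" and "v' \<in> pop (pop \<rho>) v"
  shows "\<exists>x. is_bead V par r (pop (pop \<rho>)) v v' x \<and> x \<in> pop \<rho> v"
proof -
  define \<tau> where "\<tau> = pop \<rho>"
  have \<tau>: "\<tau> \<in> orns"
    unfolding \<tau>_def using Pop_in_ornamentations[OF \<rho>] .
  have "v' \<in> \<tau> v"
    using \<open>v' \<in> pop (pop \<rho>) v\<close> Pop_subset unfolding \<tau>_def by blast
  have "v \<in> V" "v' \<preceq> v"
    using children_tle[OF child] tle_in_V by auto
  let ?A = "{v} \<union> {z \<in> \<tau> v. \<not> z \<preceq> v'}"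
  have \<tau>A: "\<tau>(v := ?A) \<in> orns"
    using ornamentation_update_cut[OF \<tau> ornamentation_update_singleton[OF \<tau> \<open>v \<in> V\<close>] _
        cut_point_child[OF \<tau> child \<open>v' \<in> \<tau> v\<close>]]
      ornamentation_self[OF \<tau> \<open>v \<in> V\<close>]
    by blast
  moreover have A_psubset: "?A \<subset> \<tau> v"
    using \<open>v' \<in> \<tau> v\<close> ornamentation_self[OF \<tau> \<open>v \<in> V\<close>] children_tle(2)[OF child]
      tle_refl[OF tle_in_V(1)[OF \<open>v' \<preceq> v\<close>]]
    by blast
  then obtain x where x: "x \<in> \<tau> v" "x \<notin> ?A" "x \<notin> pop \<tau> v"
    using Pop_drops_outside_shrinking[OF \<tau> \<tau>A A_psubset] by blast
  then have "x \<preceq> v'"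
    by blast
  have "y \<in> pop \<tau> v \<or> pop \<tau> y = {y}" if "x \<preceq> y" "y \<preceq> v'" for y
    using mem_Pop_Pop_or_singleton[OF \<rho>] ornamentation_convex[OF \<tau> x(1) that(1) tle_trans[OF that(2) \<open>v' \<preceq> v\<close>]]
    unfolding \<tau>_def by blast
  then have "is_bead V par r (pop \<tau>) v v' x"
    unfolding is_bead_def using x(3) \<open>x \<preceq> v'\<close> tle_in_V by blast
  then show ?thesis
    using x(1) unfolding \<tau>_def by blast
qed

lemma beads_Pop_Pop_psubset:
  assumes "\<rho> \<in> orns" "v' \<in> children V par r v" "v' \<in> pop (pop \<rho>) v"
  shows "{x. is_bead V par r (pop \<rho>) v v' x} \<subset> {x. is_bead V par r (pop (pop \<rho>)) v v' x}"
proof -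
  obtain x where "is_bead V par r (pop (pop \<rho>)) v v' x" "x \<in> pop \<rho> v"
    using ex_new_bead_Pop_Pop[OF assms] by blast
  moreover have "\<not> is_bead V par r (pop \<rho>) v v' x"
    using \<open>x \<in> pop \<rho> v\<close> unfolding is_bead_def by blast
  ultimately show ?thesis
    using is_bead_Pop_Pop[OF assms(1)] by blast
qed

lemma finite_beads: "finite {x. is_bead V par r \<sigma> v v' x}"
  by (rule finite_subset[OF _ finite_V]) (auto simp: is_bead_def)

lemma card_bead_ornaments:
  "card {\<sigma> x | x. is_bead V par r \<sigma> v v' x} = card {x. is_bead V par r \<sigma> v v' x}"
proof -
  have "\<sigma> x = {x}" if "is_bead V par r \<sigma> v v' x" for x
    using that tle_refl unfolding is_bead_def by blast
  then have "{\<sigma> x | x. is_bead V par r \<sigma> v v' x} = (\<lambda>x. {x}) ` {x. is_bead V par r \<sigma> v v' x}"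
    unfolding setcompr_eq_image by (intro image_cong) simp_all
  then show ?thesis
    by (simp add: card_image)
qed

lemma card_beads_funpow_Pop:
  assumes "\<delta> \<in> orns" "v' \<in> children V par r v" "v' \<in> (pop ^^ Suc j) \<delta> v"
  shows "j \<le> card {x. is_bead V par r ((pop ^^ Suc j) \<delta>) v v' x}"
  using assms(3)
proof (induction j)
  case 0
  show ?case by simp
next
  case (Suc j)
  let ?\<rho> = "(pop ^^ j) \<delta>"
  have \<rho>: "?\<rho> \<in> orns"
    using funpow_Pop_in_ornamentations[OF assms(1)] .
  have "v' \<in> pop (pop ?\<rho>) v"
    using Suc.prems by simp
  then have "v' \<in> pop ?\<rho> v"
    using Pop_subset by blast
  then have "j \<le> card {x. is_bead V par r (pop ?\<rho>) v v' x}"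
    using Suc.IH by simp
  also have "\<dots> < card {x. is_bead V par r (pop (pop ?\<rho>)) v v' x}"
    using psubset_card_mono[OF finite_beads beads_Pop_Pop_psubset[OF \<rho> assms(2) \<open>v' \<in> pop (pop ?\<rho>) v\<close>]] .
  finally show ?case
    by simp
qed

end

theorem proposition5p3:
  fixes V :: "'a set" and par :: "'a \<Rightarrow> 'a" and r :: 'a
    and \<delta> \<delta>' :: "'a \<Rightarrow> 'a set" and k :: nat and v v' :: 'a
  assumes "rooted_tree V par r"
    and "\<delta> \<in> ornamentations V par r"
    and "\<delta>' = (Pop V par r ^^ k) \<delta>"
    and "v \<in> V"
    and "v' \<in> children V par r v"
    and "v' \<in> \<delta>' v"
  shows "card {\<delta>' x | x. is_bead V par r \<delta>' v v' x} \<ge> k - 1"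
proof -
  interpret rtree V par r
    using assms(1) by (rule rtree.intro)
  show ?thesis
  proof (cases k)
    case 0
    then show ?thesis by simp
  next
    case (Suc j)
    then have "j \<le> card {x. is_bead V par r \<delta>' v v' x}"
      using card_beads_funpow_Pop[OF assms(2,5)] assms(3,6) by simp
    then show ?thesis
      using Suc card_bead_ornaments by simp
  qed
qed

end
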